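(* Let $(A_n)_{n\ge1}$ be a sequence of nonnegative integer matrices, $A_n$ of size $f(n+1)\times f(n)$, such that each $A_n$ has all column sums equal, and such that the direct limit $G$ of $\mathbb Z^{f(1)}\xrightarrow{A_1}\mathbb Z^{f(2)}\xrightarrow{A_2}\cdots$ (with the induced ordering) is a simple non-cyclic dimension group. Then $G$ is globally irrationally miscible.
   Context: The direct limit is ordered by the union of the images of $\mathbb Z_+^{f(n)}$. A dimension group is simple if it has no nontrivial order ideals. For an order unit $u$, $S(G,u)$ is the set of states (homomorphisms $\sigma:G\to\mathbb R$, $\sigma(G^+)\ge0$, $\sigma(u)=1$); $J(G,u)=\{g:\sigma\mapsto\sigma(g)\text{ constant on }S(G,u)\}$ with $\Phi(g)$ the constant. $(G,u)$ is irrationally miscible if $\Phi(J(G,u))\subseteq\mathbb Q$; $G$ is globally irrationally miscible if this holds for every order unit $u$. *)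

theory Defs
  imports Complex_Main "HOL-Library.Countable_Set"
begin

record 'a pog =
  pcar :: "'a set"
  padd :: "'a \<Rightarrow> 'a \<Rightarrow> 'a"
  pzero :: "'a"
  pneg :: "'a \<Rightarrow> 'a"
  ppos :: "'a set"

definition pog_le :: "'a pog \<Rightarrow> 'a \<Rightarrow> 'a \<Rightarrow> bool" where
  "pog_le G a b \<longleftrightarrow> a \<in> pcar G \<and> b \<in> pcar G \<and> padd G b (pneg G a) \<in> ppos G"

definition pog_zmul :: "'a pog \<Rightarrow> int \<Rightarrow> 'a \<Rightarrow> 'a" where
  "pog_zmul G k g = (if 0 \<le> k then (padd G g ^^ nat k) (pzero G)
                     else pneg G ((padd G g ^^ nat (- k)) (pzero G)))"

definition is_pog :: "'a pog \<Rightarrow> bool" where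
  "is_pog G \<longleftrightarrow>
     (\<forall>a\<in>pcar G. \<forall>b\<in>pcar G. padd G a b \<in> pcar G) \<and>
     pzero G \<in> pcar G \<and> (\<forall>a\<in>pcar G. pneg G a \<in> pcar G) \<and>
     (\<forall>a\<in>pcar G. \<forall>b\<in>pcar G. \<forall>c\<in>pcar G. padd G (padd G a b) c = padd G a (padd G b c)) \<and>
     (\<forall>a\<in>pcar G. \<forall>b\<in>pcar G. padd G a b = padd G b a) \<and>
     (\<forall>a\<in>pcar G. padd G a (pzero G) = a) \<and>
     (\<forall>a\<in>pcar G. padd G a (pneg G a) = pzero G) \<and>
     ppos G \<subseteq> pcar G \<and> pzero G \<in> ppos G \<and>
     (\<forall>a\<in>ppos G. \<forall>b\<in>ppos G. padd G a b \<in> ppos G) \<and>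
     (\<forall>a\<in>ppos G. pneg G a \<in> ppos G \<longrightarrow> a = pzero G)"

text \<open>Dimension group (Effros--Handelman--Shen axiomatic form): countable, directed,
  unperforated partially ordered abelian group with the Riesz interpolation property.\<close>
definition dimension_group :: "'a pog \<Rightarrow> bool" where
  "dimension_group G \<longleftrightarrow> is_pog G \<and> countable (pcar G) \<and>
     (\<forall>g\<in>pcar G. \<exists>a\<in>ppos G. \<exists>b\<in>ppos G. g = padd G a (pneg G b)) \<and>
     (\<forall>g\<in>pcar G. \<forall>n::nat. n \<ge> 1 \<longrightarrow> pog_zmul G (int n) g \<in> ppos G \<longrightarrow> g \<in> ppos G) \<and>
     (\<forall>a1 a2 b1 b2. pog_le G a1 b1 \<and> pog_le G a1 b2 \<and> pog_le G a2 b1 \<and> pog_le G a2 b2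
        \<longrightarrow> (\<exists>c. pog_le G a1 c \<and> pog_le G a2 c \<and> pog_le G c b1 \<and> pog_le G c b2))"

definition order_ideal :: "'a pog \<Rightarrow> 'a set \<Rightarrow> bool" where
  "order_ideal G I \<longleftrightarrow> I \<subseteq> pcar G \<and> pzero G \<in> I \<and>
     (\<forall>a\<in>I. \<forall>b\<in>I. padd G a b \<in> I) \<and> (\<forall>a\<in>I. pneg G a \<in> I) \<and>
     (\<forall>x\<in>I. \<exists>a\<in>I \<inter> ppos G. \<exists>b\<in>I \<inter> ppos G. x = padd G a (pneg G b)) \<and>
     (\<forall>a b. b \<in> I \<and> pog_le G (pzero G) a \<and> pog_le G a b \<longrightarrow> a \<in> I)"

definition simple_pog :: "'a pog \<Rightarrow> bool" where
  "simple_pog G \<longleftrightarrow> (\<forall>I. order_ideal G I \<longrightarrow> I = {pzero G} \<or> I = pcar G)"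

definition cyclic_pog :: "'a pog \<Rightarrow> bool" where
  "cyclic_pog G \<longleftrightarrow> (\<exists>g\<in>pcar G. pcar G = range (\<lambda>k. pog_zmul G k g))"

definition order_unit :: "'a pog \<Rightarrow> 'a \<Rightarrow> bool" where
  "order_unit G u \<longleftrightarrow> u \<in> ppos G \<and> (\<forall>g\<in>pcar G. \<exists>n::nat. pog_le G g (pog_zmul G (int n) u))"

text \<open>States S(G,u); a state is only meaningful on the carrier, so we take them
  as functions that vanish off the carrier (to avoid junk values).\<close>
definition states :: "'a pog \<Rightarrow> 'a \<Rightarrow> ('a \<Rightarrow> real) set" where
  "states G u = {\<sigma>. (\<forall>a\<in>pcar G. \<forall>b\<in>pcar G. \<sigma> (padd G a b) = \<sigma> a + \<sigma> b) \<and>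
                    (\<forall>a\<in>ppos G. \<sigma> a \<ge> 0) \<and> \<sigma> u = 1 \<and> (\<forall>a. a \<notin> pcar G \<longrightarrow> \<sigma> a = 0)}"

definition Jset :: "'a pog \<Rightarrow> 'a \<Rightarrow> 'a set" where
  "Jset G u = {g\<in>pcar G. \<forall>\<sigma>\<in>states G u. \<forall>\<tau>\<in>states G u. \<sigma> g = \<tau> g}"

definition irr_miscible :: "'a pog \<Rightarrow> 'a \<Rightarrow> bool" where
  "irr_miscible G u \<longleftrightarrow> (\<forall>g\<in>Jset G u. \<forall>\<sigma>\<in>states G u. \<sigma> g \<in> \<rat>)"

definition globally_irr_miscible :: "'a pog \<Rightarrow> bool" where
  "globally_irr_miscible G \<longleftrightarrow> (\<forall>u. order_unit G u \<longrightarrow> irr_miscible G u)"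

text \<open>Vectors in Z^k are functions nat => int vanishing from index k on;
  A n i j is the (i,j) entry of the f(n+1) x f(n) matrix A_n.\<close>

definition dl_vec :: "nat \<Rightarrow> (nat \<Rightarrow> int) \<Rightarrow> bool" where
  "dl_vec k v \<longleftrightarrow> (\<forall>i\<ge>k. v i = 0)"

definition dl_step :: "(nat \<Rightarrow> nat) \<Rightarrow> (nat \<Rightarrow> nat \<Rightarrow> nat \<Rightarrow> nat) \<Rightarrow> nat \<Rightarrow> (nat \<Rightarrow> int) \<Rightarrow> (nat \<Rightarrow> int)" where
  "dl_step f A n v = (\<lambda>i. if i < f (Suc n) then (\<Sum>j<f n. int (A n i j) * v j) else 0)"

fun dl_push :: "(nat \<Rightarrow> nat) \<Rightarrow> (nat \<Rightarrow> nat \<Rightarrow> nat \<Rightarrow> nat) \<Rightarrow> nat \<Rightarrow> nat \<Rightarrow> (nat \<Rightarrow> int) \<Rightarrow> (nat \<Rightarrow> int)" where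
  "dl_push f A n 0 v = v"
| "dl_push f A n (Suc k) v = dl_step f A (n + k) (dl_push f A n k v)"

definition dl_rel :: "(nat \<Rightarrow> nat) \<Rightarrow> (nat \<Rightarrow> nat \<Rightarrow> nat \<Rightarrow> nat) \<Rightarrow> ((nat \<times> (nat \<Rightarrow> int)) \<times> (nat \<times> (nat \<Rightarrow> int))) set" where
  "dl_rel f A = {((n, v), (m, w)). dl_vec (f n) v \<and> dl_vec (f m) w \<and>
      (\<exists>k. n \<le> k \<and> m \<le> k \<and> dl_push f A n (k - n) v = dl_push f A m (k - m) w)}"

definition DL :: "(nat \<Rightarrow> nat) \<Rightarrow> (nat \<Rightarrow> nat \<Rightarrow> nat \<Rightarrow> nat) \<Rightarrow> (nat \<times> (nat \<Rightarrow> int)) set pog" where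
  "DL f A = \<lparr>
     pcar = {(n, v). dl_vec (f n) v} // dl_rel f A,
     padd = (\<lambda>x y. dl_rel f A `` {(n, \<lambda>i. v i + w i) | n v w. (n, v) \<in> x \<and> (n, w) \<in> y}),
     pzero = dl_rel f A `` {(0, \<lambda>i. 0)},
     pneg = (\<lambda>x. {(n, \<lambda>i. - v i) | n v. (n, v) \<in> x}),
     ppos = {x \<in> {(n, v). dl_vec (f n) v} // dl_rel f A. \<exists>(n, v)\<in>x. \<forall>i. 0 \<le> v i} \<rparr>"

end

theory Submission
  imports Defs
begin

text \<open>Equal column sums make the total mass \<open>\<Sum>\<^sub>i v i\<close> of a vector equivariant: \<open>A\<^sub>n\<close>
  multiplies it by the common column sum \<open>c\<^sub>n\<close>. Unless the limit is trivial, \<open>c\<^sub>n > 0\<close>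
  eventually, and dividing the mass of \<open>v \<in> \<int>\<^bsup>f(n)\<^esup>\<close> by \<open>c\<^sub>N \<cdots> c\<^sub>n\<^sub>-\<^sub>1\<close> gives a positive
  functional on \<open>G\<close> with rational values. Normalised at an order unit \<open>u\<close> it is a state,
  and every element of \<open>J(G,u)\<close> takes the same value at all states, hence a rational one.\<close>

definition positive_functional :: "'a pog \<Rightarrow> ('a \<Rightarrow> real) \<Rightarrow> bool" where
  "positive_functional G s \<longleftrightarrow>
     (\<forall>a\<in>pcar G. \<forall>b\<in>pcar G. s (padd G a b) = s a + s b) \<and>
     (\<forall>a\<in>ppos G. 0 \<le> s a) \<and> (\<forall>a. a \<notin> pcar G \<longrightarrow> s a = 0)"

lemma states_eq: "states G u = {\<sigma>. positive_functional G \<sigma> \<and> \<sigma> u = 1}"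
  by (auto simp: states_def positive_functional_def)

lemma positive_functional_zero:
  assumes "is_pog G" "positive_functional G s"
  shows "s (pzero G) = 0"
proof -
  have "pzero G \<in> pcar G" "padd G (pzero G) (pzero G) = pzero G"
    using assms(1) by (auto simp: is_pog_def)
  then have "s (pzero G) = s (pzero G) + s (pzero G)"
    using assms(2) unfolding positive_functional_def by metis
  then show ?thesis by simp
qed

lemma positive_functional_neg:
  assumes "is_pog G" "positive_functional G s" "a \<in> pcar G"
  shows "s (pneg G a) = - s a"
proof -
  have "pneg G a \<in> pcar G" "padd G a (pneg G a) = pzero G"
    using assms(1,3) by (auto simp: is_pog_def)
  then have "s a + s (pneg G a) = s (pzero G)"
    using assms(2,3) unfolding positive_functional_def by metis
  then have "s a + s (pneg G a) = 0"
    using positive_functional_zero[OF assms(1,2)] by simp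
  then show ?thesis by simp
qed

lemma positive_functional_nat_mul:
  assumes "is_pog G" "positive_functional G s" "a \<in> pcar G"
  shows "pog_zmul G (int n) a \<in> pcar G \<and> s (pog_zmul G (int n) a) = real n * s a"
proof -
  have "(padd G a ^^ n) (pzero G) \<in> pcar G \<and> s ((padd G a ^^ n) (pzero G)) = real n * s a"
  proof (induction n)
    case 0
    then show ?case using assms(1,2) positive_functional_zero by (simp add: is_pog_def)
  next
    case (Suc n)
    then show ?case
      using assms unfolding positive_functional_def is_pog_def by (simp add: algebra_simps)
  qed
  then show ?thesis by (simp add: pog_zmul_def)
qed

text \<open>If \<open>g \<le> n u\<close> then \<open>0 < s g \<le> n s u\<close>.\<close>
lemma positive_functional_order_unit_pos:
  assumes G: "is_pog G" and s: "positive_functional G s"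
    and g: "g \<in> pcar G" "0 < s g" and u: "order_unit G u"
  shows "0 < s u"
proof -
  have uc: "u \<in> pcar G" using u G by (auto simp: order_unit_def is_pog_def)
  obtain n :: nat where "pog_le G g (pog_zmul G (int n) u)"
    using u g unfolding order_unit_def by blast
  then have pos: "padd G (pog_zmul G (int n) u) (pneg G g) \<in> ppos G"
    by (simp add: pog_le_def)
  have nu: "pog_zmul G (int n) u \<in> pcar G" "s (pog_zmul G (int n) u) = real n * s u"
    using positive_functional_nat_mul[OF G s uc] by auto
  have "pneg G g \<in> pcar G" using G g by (simp add: is_pog_def)
  then have "s (padd G (pog_zmul G (int n) u) (pneg G g)) = real n * s u - s g"
    using nu s positive_functional_neg[OF G s g(1)] unfolding positive_functional_def by simp
  moreover have "0 \<le> s (padd G (pog_zmul G (int n) u) (pneg G g))"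
    using pos s unfolding positive_functional_def by blast
  ultimately have "0 \<le> real n * s u - s g" by simp
  with g(2) have "0 < real n * s u" by linarith
  then show ?thesis by (simp add: zero_less_mult_iff)
qed

lemma normalised_positive_functional_state:
  assumes "positive_functional G s" "0 < s u"
  shows "(\<lambda>x. s x / s u) \<in> states G u"
  using assms by (auto simp: states_eq positive_functional_def add_divide_distrib)

lemma irr_miscible_if_rational_state:
  assumes "\<tau> \<in> states G u" "\<forall>g\<in>pcar G. \<tau> g \<in> \<rat>"
  shows "irr_miscible G u"
  using assms unfolding irr_miscible_def Jset_def by auto

lemma globally_irr_miscible_if_rational_functional:
  assumes G: "is_pog G" and s: "positive_functional G s" and rat: "\<forall>x. s x \<in> \<rat>"
    and g: "g \<in> pcar G" "0 < s g"
  shows "globally_irr_miscible G"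
  unfolding globally_irr_miscible_def
proof (intro allI impI)
  fix u assume "order_unit G u"
  then have "0 < s u" using positive_functional_order_unit_pos[OF G s g] by blast
  then show "irr_miscible G u"
    using irr_miscible_if_rational_state normalised_positive_functional_state[OF s] rat
    by (metis Rats_divide)
qed

lemma globally_irr_miscible_trivial:
  assumes G: "is_pog G" and triv: "pcar G \<subseteq> {pzero G}"
  shows "globally_irr_miscible G"
  unfolding globally_irr_miscible_def irr_miscible_def
proof (intro allI impI ballI)
  fix u g \<sigma> assume u: "order_unit G u" and \<sigma>: "\<sigma> \<in> states G u"
  have "u \<in> pcar G" using u G unfolding order_unit_def is_pog_def by blast
  then have "u = pzero G" using triv by blast
  then have False using \<sigma> positive_functional_zero[OF G] by (force simp: states_eq)
  then show "\<sigma> g \<in> \<rat>" ..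
qed

abbreviation equal_column_sums :: "(nat \<Rightarrow> nat) \<Rightarrow> (nat \<Rightarrow> nat \<Rightarrow> nat \<Rightarrow> nat) \<Rightarrow> bool" where
  "equal_column_sums f A \<equiv> \<forall>n. \<exists>c. \<forall>j<f n. (\<Sum>i<f (Suc n). A n i j) = c"

lemma dl_push_add: "dl_push f A n (a + b) v = dl_push f A (n + a) b (dl_push f A n a v)"
  by (induction b) (simp_all add: add.assoc)

lemma dl_push_via:
  assumes "a \<le> k" "k \<le> K"
  shows "dl_push f A a (K - a) v = dl_push f A k (K - k) (dl_push f A a (k - a) v)"
  using dl_push_add[of f A a "k - a" "K - k" v] assms by simp

lemma dl_vec_push: "dl_vec (f n) v \<Longrightarrow> dl_vec (f (n + k)) (dl_push f A n k v)"
  by (induction k) (auto simp: dl_vec_def dl_step_def)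

lemma dl_push_zero: "dl_push f A n k (\<lambda>i. 0) = (\<lambda>i. 0)"
  by (induction k) (auto simp: dl_step_def)

lemma dl_rel_push:
  assumes "dl_vec (f n) v" "n \<le> k"
  shows "((n, v), (k, dl_push f A n (k - n) v)) \<in> dl_rel f A"
  using assms dl_vec_push[where f=f and n=n and k="k - n" and A=A, OF assms(1)] by (auto simp: dl_rel_def intro!: exI[of _ k])

lemma dl_rel_eventually_eq:
  assumes "((a, v), (b, w)) \<in> dl_rel f A"
  obtains k where "\<And>K. k \<le> K \<Longrightarrow> a \<le> K \<and> b \<le> K \<and> dl_push f A a (K - a) v = dl_push f A b (K - b) w"
proof -
  obtain k where k: "a \<le> k" "b \<le> k" "dl_push f A a (k - a) v = dl_push f A b (k - b) w"
    using assms by (auto simp: dl_rel_def)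
  have "dl_push f A a (K - a) v = dl_push f A b (K - b) w" if "k \<le> K" for K
    using dl_push_via[of a k K f A v] dl_push_via[of b k K f A w] k that by simp
  with k show ?thesis by (intro that[of k]) auto
qed

lemma equiv_dl_rel: "equiv {(n, v). dl_vec (f n) v} (dl_rel f A)"
proof (rule equivI)
  show "dl_rel f A \<subseteq> {(n, v). dl_vec (f n) v} \<times> {(n, v). dl_vec (f n) v}"
    by (auto simp: dl_rel_def)
  show "refl_on {(n, v). dl_vec (f n) v} (dl_rel f A)"
    by (auto simp: refl_on_def dl_rel_def)
  show "sym (dl_rel f A)"
    by (auto simp: sym_def dl_rel_def)
  show "trans (dl_rel f A)"
  proof (rule transI)
    fix x y z assume xy: "(x, y) \<in> dl_rel f A" and yz: "(y, z) \<in> dl_rel f A"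
    obtain a v b w c u where eq: "x = (a, v)" "y = (b, w)" "z = (c, u)" by (metis prod.exhaust)
    obtain k1 where k1: "\<And>K. k1 \<le> K \<Longrightarrow> a \<le> K \<and> dl_push f A a (K - a) v = dl_push f A b (K - b) w"
      using dl_rel_eventually_eq xy eq by metis
    obtain k2 where k2: "\<And>K. k2 \<le> K \<Longrightarrow> c \<le> K \<and> dl_push f A b (K - b) w = dl_push f A c (K - c) u"
      using dl_rel_eventually_eq yz eq by metis
    have "a \<le> max k1 k2" "c \<le> max k1 k2"
      "dl_push f A a (max k1 k2 - a) v = dl_push f A c (max k1 k2 - c) u"
      using k1[of "max k1 k2"] k2[of "max k1 k2"] by auto
    then show "(x, z) \<in> dl_rel f A" using xy yz eq by (auto simp: dl_rel_def)
  qed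
qed

lemma DL_carrier: "pcar (DL f A) = {(n, v). dl_vec (f n) v} // dl_rel f A"
  by (simp add: DL_def)

lemma DL_class_dl_vec:
  assumes "x \<in> pcar (DL f A)" "(n, v) \<in> x"
  shows "dl_vec (f n) v"
proof -
  have "x \<subseteq> {(n, v). dl_vec (f n) v}"
    using assms(1) equiv_dl_rel[of f A] unfolding DL_carrier by (auto elim!: quotientE simp: equiv_def refl_on_def)
  then show ?thesis using assms(2) by blast
qed

lemma DL_class_push:
  assumes x: "x \<in> pcar (DL f A)" and nv: "(n, v) \<in> x" and "n \<le> k"
  shows "(k, dl_push f A n (k - n) v) \<in> x"
proof -
  have "((n, v), (k, dl_push f A n (k - n) v)) \<in> dl_rel f A"
    using dl_rel_push DL_class_dl_vec[OF x nv] assms(3) by blast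
  moreover obtain q where "x = dl_rel f A `` {q}"
    using x unfolding DL_carrier by (auto elim!: quotientE)
  ultimately show ?thesis
    using nv equiv_dl_rel[of f A] unfolding equiv_def trans_def by blast
qed

lemma DL_class_nonempty:
  assumes "x \<in> pcar (DL f A)"
  obtains n v where "(n, v) \<in> x"
  using in_quotient_imp_non_empty[OF equiv_dl_rel] assms unfolding DL_carrier by fastforce

definition col_sum :: "(nat \<Rightarrow> nat) \<Rightarrow> (nat \<Rightarrow> nat \<Rightarrow> nat \<Rightarrow> nat) \<Rightarrow> nat \<Rightarrow> nat" where
  "col_sum f A m = (\<Sum>i<f (Suc m). A m i 0)"

definition col_sum_prod :: "(nat \<Rightarrow> nat) \<Rightarrow> (nat \<Rightarrow> nat \<Rightarrow> nat \<Rightarrow> nat) \<Rightarrow> nat \<Rightarrow> nat \<Rightarrow> nat" where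
  "col_sum_prod f A n k = (\<Prod>i<k. col_sum f A (n + i))"

lemma col_sum_prod_add: "col_sum_prod f A n (a + b) = col_sum_prod f A n a * col_sum_prod f A (n + a) b"
  by (induction b) (simp_all add: col_sum_prod_def add.assoc)

lemma column_sum_eq_col_sum:
  assumes "equal_column_sums f A" "j < f n"
  shows "(\<Sum>i<f (Suc n). A n i j) = col_sum f A n"
  using assms unfolding col_sum_def by (metis gr_zeroI less_zeroE)

lemma sum_dl_step:
  assumes "equal_column_sums f A"
  shows "(\<Sum>i<f (Suc n). dl_step f A n v i) = int (col_sum f A n) * (\<Sum>j<f n. v j)"
proof -
  have "(\<Sum>i<f (Suc n). dl_step f A n v i) = (\<Sum>j<f n. \<Sum>i<f (Suc n). int (A n i j) * v j)"
    by (simp add: dl_step_def sum.swap[of _ "{..<f n}"])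
  also have "\<dots> = (\<Sum>j<f n. int (\<Sum>i<f (Suc n). A n i j) * v j)"
    by (simp add: sum_distrib_right)
  also have "\<dots> = (\<Sum>j<f n. int (col_sum f A n) * v j)"
    using column_sum_eq_col_sum[OF assms] by simp
  finally show ?thesis by (simp add: sum_distrib_left)
qed

lemma sum_dl_push:
  assumes "equal_column_sums f A"
  shows "(\<Sum>i<f (n + k). dl_push f A n k v i) = int (col_sum_prod f A n k) * (\<Sum>j<f n. v j)"
  by (induction k) (simp_all add: col_sum_prod_def sum_dl_step[OF assms])

lemma dl_step_degenerate:
  assumes "equal_column_sums f A" "f m = 0 \<or> col_sum f A m = 0" "dl_vec (f m) w"
  shows "dl_step f A m w = (\<lambda>i. 0)"
proof (cases "f m = 0")
  case True
  then show ?thesis using assms(3) by (auto simp: dl_step_def dl_vec_def)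
next
  case False
  then have "A m i j = 0" if "i < f (Suc m)" "j < f m" for i j
    using column_sum_eq_col_sum[OF assms(1) that(2)] assms(2) that(1) by simp
  then show ?thesis by (auto simp: dl_step_def)
qed

text \<open>If degenerate levels occur infinitely often, every vector is eventually pushed to \<open>0\<close>.\<close>
lemma DL_trivial:
  assumes cols: "equal_column_sums f A" and degenerate: "\<forall>N. \<exists>m\<ge>N. f m = 0 \<or> col_sum f A m = 0"
  shows "pcar (DL f A) \<subseteq> {pzero (DL f A)}"
proof
  fix x assume "x \<in> pcar (DL f A)"
  then obtain n v where x: "x = dl_rel f A `` {(n, v)}" and v: "dl_vec (f n) v"
    unfolding DL_carrier by (auto elim!: quotientE)
  obtain m where m: "n \<le> m" "f m = 0 \<or> col_sum f A m = 0" using degenerate by blast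
  have "dl_push f A n (Suc m - n) v = dl_step f A m (dl_push f A n (m - n) v)"
    using m(1) by (simp add: Suc_diff_le)
  also have "\<dots> = dl_push f A 0 (Suc m - 0) (\<lambda>i. 0)"
    using dl_step_degenerate[OF cols m(2)] dl_vec_push[where f=f and n=n and k="m - n" and A=A, OF v] m(1) dl_push_zero by simp
  finally have "((n, v), (0, \<lambda>i. 0)) \<in> dl_rel f A"
    using v m(1) unfolding dl_rel_def by (auto simp: dl_vec_def intro!: exI[of _ "Suc m"])
  then show "x \<in> {pzero (DL f A)}"
    using x equiv_class_eq[OF equiv_dl_rel] by (simp add: DL_def)
qed

locale dl_eventually_nondegenerate =
  fixes f :: "nat \<Rightarrow> nat" and A :: "nat \<Rightarrow> nat \<Rightarrow> nat \<Rightarrow> nat" and N :: nat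
  assumes equal_column_sums: "equal_column_sums f A"
    and nondegenerate: "\<And>m. N \<le> m \<Longrightarrow> 0 < f m \<and> 0 < col_sum f A m"
    and is_pog: "is_pog (DL f A)"
begin

text \<open>A level-\<open>n\<close> vector is pushed to level \<open>M = max n N\<close> and its mass divided by
  \<open>c\<^sub>N \<cdots> c\<^bsub>M-1\<^esub>\<close>; by \<open>mass_weight_eq\<close> any level \<open>K \<ge> n, N\<close> gives the same ratio.\<close>
definition mass_weight :: "nat \<Rightarrow> real" where
  "mass_weight n = col_sum_prod f A n (max n N - n) / col_sum_prod f A N (max n N - N)"

definition rep_mass :: "nat \<times> (nat \<Rightarrow> int) \<Rightarrow> real" where
  "rep_mass p = of_int (\<Sum>j<f (fst p). snd p j) * mass_weight (fst p)"

definition mass :: "(nat \<times> (nat \<Rightarrow> int)) set \<Rightarrow> real" where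
  "mass x = (if x \<in> pcar (DL f A) then rep_mass (SOME p. p \<in> x) else 0)"

lemma col_sum_prod_pos: "N \<le> m \<Longrightarrow> 0 < col_sum_prod f A m k"
  using nondegenerate unfolding col_sum_prod_def by (auto intro!: prod_pos)

lemma mass_weight_eq:
  assumes "n \<le> K" "N \<le> K"
  shows "mass_weight n = col_sum_prod f A n (K - n) / col_sum_prod f A N (K - N)"
proof -
  define M where "M = max n N"
  have M: "n \<le> M" "N \<le> M" "M \<le> K" using assms by (auto simp: M_def)
  have "col_sum_prod f A n (K - n) = col_sum_prod f A n (M - n) * col_sum_prod f A M (K - M)"
    "col_sum_prod f A N (K - N) = col_sum_prod f A N (M - N) * col_sum_prod f A M (K - M)"
    using col_sum_prod_add[of f A n "M - n" "K - M"] col_sum_prod_add[of f A N "M - N" "K - M"] M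
    by simp_all
  moreover have "0 < col_sum_prod f A M (K - M)" using col_sum_prod_pos M by simp
  ultimately show ?thesis unfolding mass_weight_def M_def[symmetric] by simp
qed

lemma rep_mass_push:
  assumes "n \<le> K" "N \<le> K"
  shows "rep_mass (n, v) = (\<Sum>i<f K. dl_push f A n (K - n) v i) / col_sum_prod f A N (K - N)"
  using sum_dl_push[OF equal_column_sums, of n "K - n" v] mass_weight_eq[OF assms] assms
  by (simp add: rep_mass_def)

lemma rep_mass_dl_rel:
  assumes "((a, v), (b, w)) \<in> dl_rel f A"
  shows "rep_mass (a, v) = rep_mass (b, w)"
proof -
  obtain k where k: "\<And>K. k \<le> K \<Longrightarrow> a \<le> K \<and> b \<le> K \<and> dl_push f A a (K - a) v = dl_push f A b (K - b) w"
    using dl_rel_eventually_eq[OF assms] by blast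
  show ?thesis
    using k[of "max k N"] rep_mass_push[of a "max k N" v] rep_mass_push[of b "max k N" w] by simp
qed

lemma mass_eq:
  assumes x: "x \<in> pcar (DL f A)" and p: "p \<in> x"
  shows "mass x = rep_mass p"
proof -
  have "(SOME p. p \<in> x) \<in> x" using p by (rule someI)
  then have "((SOME p. p \<in> x), p) \<in> dl_rel f A"
    using in_quotient_imp_in_rel[OF equiv_dl_rel] x p unfolding DL_carrier by blast
  then show ?thesis using x by (simp add: mass_def) (metis prod.exhaust rep_mass_dl_rel)
qed

lemma mass_add:
  assumes x: "x \<in> pcar (DL f A)" and y: "y \<in> pcar (DL f A)"
  shows "mass (padd (DL f A) x y) = mass x + mass y"
proof -
  obtain n v m w where nv: "(n, v) \<in> x" and mw: "(m, w) \<in> y"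
    using DL_class_nonempty x y by metis
  define k where "k = max n m"
  define v' where "v' = dl_push f A n (k - n) v"
  define w' where "w' = dl_push f A m (k - m) w"
  have xv: "(k, v') \<in> x" and yw: "(k, w') \<in> y"
    unfolding v'_def w'_def k_def using DL_class_push x y nv mw by auto
  have "dl_vec (f k) (\<lambda>i. v' i + w' i)"
    using DL_class_dl_vec[OF x xv] DL_class_dl_vec[OF y yw] by (simp add: dl_vec_def)
  then have "((k, \<lambda>i. v' i + w' i), (k, \<lambda>i. v' i + w' i)) \<in> dl_rel f A"
    by (auto simp: dl_rel_def)
  then have sum: "(k, \<lambda>i. v' i + w' i) \<in> padd (DL f A) x y"
    using xv yw by (auto simp: DL_def)
  have "padd (DL f A) x y \<in> pcar (DL f A)" using is_pog x y by (simp add: is_pog_def)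
  then have "mass (padd (DL f A) x y) = rep_mass (k, \<lambda>i. v' i + w' i)"
    using mass_eq sum by blast
  also have "\<dots> = rep_mass (k, v') + rep_mass (k, w')"
    by (simp add: rep_mass_def sum.distrib algebra_simps)
  finally show ?thesis using mass_eq[OF x xv] mass_eq[OF y yw] by simp
qed

lemma mass_nonneg:
  assumes "x \<in> ppos (DL f A)"
  shows "0 \<le> mass x"
proof -
  obtain n v where x: "x \<in> pcar (DL f A)" and nv: "(n, v) \<in> x" "\<forall>i. 0 \<le> v i"
    using assms by (auto simp: DL_def)
  have "0 \<le> mass_weight n" by (simp add: mass_weight_def)
  then show ?thesis using mass_eq[OF x nv(1)] nv(2) by (simp add: rep_mass_def sum_nonneg)
qed

lemma positive_functional_mass: "positive_functional (DL f A) mass"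
  using mass_add mass_nonneg by (simp add: positive_functional_def mass_def)

lemma mass_rational: "mass x \<in> \<rat>"
proof -
  have "rep_mass p \<in> \<rat>" for p
    unfolding rep_mass_def mass_weight_def by (intro Rats_mult Rats_divide Rats_of_int Rats_of_nat)
  then show ?thesis by (simp add: mass_def)
qed

lemma unit_vector_class:
  defines "e \<equiv> dl_rel f A `` {(N, \<lambda>i. if i = 0 then 1 else 0)}"
  shows "e \<in> pcar (DL f A)" "mass e = 1"
proof -
  have v: "dl_vec (f N) (\<lambda>i. if i = 0 then 1 else 0)" and fN: "0 < f N"
    using nondegenerate[of N] by (auto simp: dl_vec_def)
  then show e: "e \<in> pcar (DL f A)" unfolding e_def DL_carrier by (auto intro: quotientI)
  have "(N, \<lambda>i. if i = 0 then 1 else 0) \<in> e"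
    using v unfolding e_def by (auto simp: dl_rel_def)
  moreover have "(\<Sum>i<f N. (if i = 0 then 1 else 0) :: int) = 1"
    using fN by (simp add: sum.delta)
  ultimately show "mass e = 1"
    using mass_eq[OF e] fN col_sum_prod_pos[of N 0] by (simp add: rep_mass_def mass_weight_def del: of_int_sum)
qed

end

theorem mainTheorem14:
  fixes f :: "nat \<Rightarrow> nat" and A :: "nat \<Rightarrow> nat \<Rightarrow> nat \<Rightarrow> nat"
  assumes "\<forall>n. \<exists>c. \<forall>j<f n. (\<Sum>i<f (Suc n). A n i j) = c"
    and "dimension_group (DL f A)"
    and "simple_pog (DL f A)"
    and "\<not> cyclic_pog (DL f A)"
  shows "globally_irr_miscible (DL f A)"
proof -
  have pog: "is_pog (DL f A)" using assms(2) by (simp add: dimension_group_def)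
  show ?thesis
  proof (cases "\<exists>N. \<forall>m\<ge>N. 0 < f m \<and> 0 < col_sum f A m")
    case True
    then obtain N where "\<forall>m\<ge>N. 0 < f m \<and> 0 < col_sum f A m" by blast
    then interpret dl_eventually_nondegenerate f A N
      using assms(1) pog by unfold_locales auto
    show ?thesis
      using globally_irr_miscible_if_rational_functional[OF pog positive_functional_mass]
        mass_rational unit_vector_class by simp
  next
    case False
    then have "pcar (DL f A) \<subseteq> {pzero (DL f A)}"
      using DL_trivial[OF assms(1)] by (meson not_le less_imp_le_nat neq0_conv)
    then show ?thesis using globally_irr_miscible_trivial[OF pog] by blast
  qed
qed

end
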